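(* (Weak Substitution Lemma) Let $\phi$ be a formula of $\mathscr{L}_{\max}$, $x$ a variable, $s$ an assignment of variables to naturals, and $c$ a constant symbol. For every $f:\mathbb{N}\to\mathbb{N}$, $\mathscr{M}_f\models\phi[s(x|c^{s})]$ if and only if $\mathscr{M}_f\models\phi(x|c)[s]$, where $s(x|c^s)$ is the assignment agreeing with $s$ except that it sends $x$ to the interpretation of $c$ in $\mathscr{M}_f$, and $\phi(x|c)$ is the result of substituting $c$ for the free occurrences of $x$ in $\phi$.
   Context: $\mathbb{N}^{<\mathbb{N}}$ denotes the set of finite sequences of naturals. The language $\mathscr{L}_{\max}$ is a first-order language extended with ellipses. Its symbols: a constant symbol $\mathbf{n}$ (also written $\bar n$) for each $n\in\mathbb{N}$; an $n$-ary function symbol $\tilde w$ for each $w:\mathbb{N}^n\to\mathbb{N}$ ($n>0$); an $n$-ary predicate symbol $\tilde p$ for each $p\subseteq\mathbb{N}^n$ ($n>0$); an "$\mathbb{N}^{<\mathbb{N}}$-ary" function symbol $\tilde G$ for each $G:\mathbb{N}^{<\mathbb{N}}\to\mathbb{N}$; one extra unary function symbol $\mathbf{f}$; and, for each variable $x$, a logical symbol $\cdots_x$. Terms and their free variables: a variable $x$ (free variables $\{x\}$); a constant (no free variables); $h(t_1,\ldots,t_n)$ for $h$ an $n$-ary or $\mathbb{N}^{<\mathbb{N}}$-ary function symbol and terms $t_i$ (free variables the union); and, for an $\mathbb{N}^{<\mathbb{N}}$-ary $G$, terms $u,v$ and a variable $x$, the term $G(u(\mathbf{0}),\cdots_x,u(v))$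 with free variables $(FV(u)\setminus\{x\})\cup FV(v)$. Formulas are built from these terms as usual. Substitution is defined by the usual induction with two new cases: for $y\neq x$, $G(u(\mathbf{0}),\cdots_x,u(v))(y|t)=G(u(y|t)(\mathbf{0}),\cdots_x,u(y|t)(v(y|t)))$, and $G(u(\mathbf{0}),\cdots_x,u(v))(x|t)=G(u(\mathbf{0}),\cdots_x,u(v(x|t)))$. For $f:\mathbb{N}\to\mathbb{N}$, $\mathscr{M}_f$ is the structure with universe $\mathbb{N}$ interpreting $\mathbf{n}$ as $n$, $\tilde w$ as $w$, $\tilde p$ as $p$, $\tilde G$ as $G$, and $\mathbf{f}$ as $f$. Under an assignment $s$, terms are evaluated by the usual induction plus the clause $G(u(\mathbf{0}),\cdots_x,u(v))^{s}=G\big(u(x|\mathbf{0})^{s},\ldots,u(x|\overline{v^{s}})^{s}\big)$; satisfaction is then defined as usual. *)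

theory Defs
  imports Main
begin

text \<open>Terms:
  Var x; Cst n (the constant symbol for n);
  Fn n w ts: the n-ary function symbol for w : N^n \<rightarrow> N (N^n modelled as lists of length n);
  FnG G ts: the N^{<N}-ary symbol for G : N^{<N} \<rightarrow> N applied to finitely many terms;
  Ff t: the extra unary symbol f;
  Ell G u x v: the ellipsis term G(u(0), ..._x, u(v)).\<close>

datatype trm =
    Var nat
  | Cst nat
  | Fn nat "nat list \<Rightarrow> nat" "trm list"
  | FnG "nat list \<Rightarrow> nat" "trm list"
  | Ff trm
  | Ell "nat list \<Rightarrow> nat" trm nat trm

datatype fm =
    Eq trm trm
  | Pred nat "nat list set" "trm list"
  | Neg fm
  | Conj fm fm
  | Disj fm fm
  | Imp fm fm
  | All nat fm
  | Ex nat fm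

fun wf_trm :: "trm \<Rightarrow> bool" where
  "wf_trm (Var x) = True"
| "wf_trm (Cst n) = True"
| "wf_trm (Fn n w ts) = (n > 0 \<and> length ts = n \<and> (\<forall>t\<in>set ts. wf_trm t))"
| "wf_trm (FnG G ts) = (\<forall>t\<in>set ts. wf_trm t)"
| "wf_trm (Ff t) = wf_trm t"
| "wf_trm (Ell G u x v) = (wf_trm u \<and> wf_trm v)"

fun wf_fm :: "fm \<Rightarrow> bool" where
  "wf_fm (Eq t1 t2) = (wf_trm t1 \<and> wf_trm t2)"
| "wf_fm (Pred n p ts) = (n > 0 \<and> p \<subseteq> {xs. length xs = n} \<and> length ts = n \<and> (\<forall>t\<in>set ts. wf_trm t))"
| "wf_fm (Neg \<phi>) = wf_fm \<phi>"
| "wf_fm (Conj \<phi> \<psi>) = (wf_fm \<phi> \<and> wf_fm \<psi>)"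
| "wf_fm (Disj \<phi> \<psi>) = (wf_fm \<phi> \<and> wf_fm \<psi>)"
| "wf_fm (Imp \<phi> \<psi>) = (wf_fm \<phi> \<and> wf_fm \<psi>)"
| "wf_fm (All x \<phi>) = wf_fm \<phi>"
| "wf_fm (Ex x \<phi>) = wf_fm \<phi>"

fun substt :: "nat \<Rightarrow> trm \<Rightarrow> trm \<Rightarrow> trm" where
  "substt y r (Var z) = (if z = y then r else Var z)"
| "substt y r (Cst n) = Cst n"
| "substt y r (Fn n w ts) = Fn n w (map (substt y r) ts)"
| "substt y r (FnG G ts) = FnG G (map (substt y r) ts)"
| "substt y r (Ff t) = Ff (substt y r t)"
| "substt y r (Ell G u x v) =
     (if x = y then Ell G u x (substt y r v)
      else Ell G (substt y r u) x (substt y r v))"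

fun substf :: "nat \<Rightarrow> trm \<Rightarrow> fm \<Rightarrow> fm" where
  "substf y r (Eq t1 t2) = Eq (substt y r t1) (substt y r t2)"
| "substf y r (Pred n p ts) = Pred n p (map (substt y r) ts)"
| "substf y r (Neg \<phi>) = Neg (substf y r \<phi>)"
| "substf y r (Conj \<phi> \<psi>) = Conj (substf y r \<phi>) (substf y r \<psi>)"
| "substf y r (Disj \<phi> \<psi>) = Disj (substf y r \<phi>) (substf y r \<psi>)"
| "substf y r (Imp \<phi> \<psi>) = Imp (substf y r \<phi>) (substf y r \<psi>)"
| "substf y r (All x \<phi>) = (if x = y then All x \<phi> else All x (substf y r \<phi>))"
| "substf y r (Ex x \<phi>) = (if x = y then Ex x \<phi> else Ex x (substf y r \<phi>))"

lemma size_substt_Cst [simp]: "size (substt y (Cst i) u) = size u"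
  by (induction y "Cst i" u rule: substt.induct)
     (auto simp: size_list_conv_sum_list comp_def intro!: arg_cong[where f=sum_list])

text \<open>Evaluation of terms in M_f under assignment s; the ellipsis clause is
  G(u(x|0)^s, ..., u(x|overline(v^s))^s), literally via substitution.\<close>
function evalt :: "(nat \<Rightarrow> nat) \<Rightarrow> (nat \<Rightarrow> nat) \<Rightarrow> trm \<Rightarrow> nat" where
  "evalt f s (Var x) = s x"
| "evalt f s (Cst n) = n"
| "evalt f s (Fn n w ts) = w (map (evalt f s) ts)"
| "evalt f s (FnG G ts) = G (map (evalt f s) ts)"
| "evalt f s (Ff t) = f (evalt f s t)"
| "evalt f s (Ell G u x v) =
     G (map (\<lambda>i. evalt f s (substt x (Cst i) u)) [0..<Suc (evalt f s v)])"
  by pat_completeness auto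
termination
  by (relation "measure (\<lambda>(f, s, t). size t)")
     (auto simp: size_list_estimation' less_Suc_eq_le)

fun sat :: "(nat \<Rightarrow> nat) \<Rightarrow> (nat \<Rightarrow> nat) \<Rightarrow> fm \<Rightarrow> bool" where
  "sat f s (Eq t1 t2) = (evalt f s t1 = evalt f s t2)"
| "sat f s (Pred n p ts) = (map (evalt f s) ts \<in> p)"
| "sat f s (Neg \<phi>) = (\<not> sat f s \<phi>)"
| "sat f s (Conj \<phi> \<psi>) = (sat f s \<phi> \<and> sat f s \<psi>)"
| "sat f s (Disj \<phi> \<psi>) = (sat f s \<phi> \<or> sat f s \<psi>)"
| "sat f s (Imp \<phi> \<psi>) = (sat f s \<phi> \<longrightarrow> sat f s \<psi>)"
| "sat f s (All x \<phi>) = (\<forall>d. sat f (s(x := d)) \<phi>)"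
| "sat f s (Ex x \<phi>) = (\<exists>d. sat f (s(x := d)) \<phi>)"

end

theory Submission
  imports Defs
begin

text \<open>Updating the assignment at x to c has the same effect as substituting the constant
  symbol for c, because a constant evaluates independently of the assignment. The only
  non-routine case is an ellipsis term with bound variable y: its instances u(y|i) are not
  subterms, so the induction is on term size, and two substitutions of constants either
  absorb one another (y = x) or commute (y \<noteq> x).\<close>

lemma substt_Cst_absorb:
  "substt x (Cst c) (substt x (Cst i) u) = substt x (Cst i) u"
  by (induction u) (auto simp: map_idI)

lemma substt_Cst_commute:
  "x \<noteq> y \<Longrightarrow>
   substt x (Cst c) (substt y (Cst i) u) = substt y (Cst i) (substt x (Cst c) u)"
  by (induction u) auto

lemma evalt_fun_upd_eq_substt:
  "evalt f (s(x := c)) t = evalt f s (substt x (Cst c) t)"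
proof (induction t arbitrary: s rule: measure_induct_rule[of size])
  case (less t)
  have args: "map (evalt f (s(x := c))) ts = map (evalt f s \<circ> substt x (Cst c)) ts"
    if "\<forall>t'\<in>set ts. size t' < size t" for ts
    using that less.IH by (auto simp del: fun_upd_apply)
  show ?case
  proof (cases t)
    case (Ell G u y v)
    have v: "evalt f (s(x := c)) v = evalt f s (substt x (Cst c) v)"
      by (rule less.IH) (simp add: Ell)
    have u: "evalt f (s(x := c)) (substt y (Cst i) u) =
             evalt f s (substt x (Cst c) (substt y (Cst i) u))" for i
      by (rule less.IH) (simp add: Ell)
    show ?thesis
    proof (cases "y = x")
      case True
      then show ?thesis
        using Ell u v by (simp add: substt_Cst_absorb del: fun_upd_apply upt_Suc)
    next
      case False
      then show ?thesis
        using Ell u v by (simp add: substt_Cst_commute del: fun_upd_apply upt_Suc)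
    qed
  next
    case (Fn n w ts)
    then have "\<forall>t'\<in>set ts. size t' < size t"
      by (simp add: size_list_estimation' less_Suc_eq_le)
    with Fn show ?thesis
      by (simp add: args del: fun_upd_apply)
  next
    case (FnG G ts)
    then have "\<forall>t'\<in>set ts. size t' < size t"
      by (simp add: size_list_estimation' less_Suc_eq_le)
    with FnG show ?thesis
      by (simp add: args del: fun_upd_apply)
  qed (use less.IH in simp_all)
qed

lemma sat_fun_upd_eq_substf:
  "sat f (s(x := c)) \<phi> \<longleftrightarrow> sat f s (substf x (Cst c) \<phi>)"
  by (induction \<phi> arbitrary: s)
     (auto simp: evalt_fun_upd_eq_substt[abs_def] comp_def fun_upd_twist simp del: fun_upd_apply)

theorem lemma3p7:
  fixes \<phi> :: fm and x :: nat and s :: "nat \<Rightarrow> nat" and c :: nat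
  assumes "wf_fm \<phi>"
  shows "\<forall>f :: nat \<Rightarrow> nat.
           sat f (s(x := evalt f s (Cst c))) \<phi> \<longleftrightarrow> sat f s (substf x (Cst c) \<phi>)"
  by (simp add: sat_fun_upd_eq_substf)

end
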